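(* Let $0\le \alpha\le 1$ and let $f,g$ be infinitely differentiable functions on $(0,\infty)$ (extending to $x=0$) with $f(0)=0$, such that all series below converge absolutely, so that they may be rearranged. For real $\beta$ define the operator $$D_x^{\beta}[h](x)=\sum_{k=0}^{\infty}\frac{\sin[\pi(\beta-k)]}{\pi(\beta-k)}\,\frac{\Gamma(\beta+1)}{\Gamma(k+1)}\,x^{k-\beta}\,\frac{d^k}{dx^k}\big[h(x)-h(0)\big],\qquad x>0,$$ where $\frac{\sin[\pi(\beta-k)]}{\pi(\beta-k)}$ is interpreted as $1$ when $\beta-k=0$. Then for $x>0$, $$D_x^{\alpha}[f(x)\,g(x)]=\sum_{l=0}^{\infty}C_\alpha^l\,g^{(l)}(x)\,D_x^{(\alpha-l)}[f(x)],$$ where $C_\alpha^l=\frac{\Gamma(\alpha+1)}{\Gamma(l+1)\Gamma(\alpha-l+1)}$ is the generalized binomial coefficient (equal to $\alpha(\alpha-1)\cdots(\alpha-l+1)/l!$). In particular, for $\alpha=n\in\mathbb{N}$ the sum terminates at $l=n$ and reduces to the Leibniz rule $\sum_{l=0}^n\binom{n}{l}g^{(l)}f^{(n-l)}=(fg)^{(n)}$.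
   Context: For $0\le\alpha\le1$ the operator $D_x^\alpha$ defined by the series above is the series expansion the paper uses for the Caputo fractional derivative ${}^C D_x^\alpha f(x)=\frac{1}{\Gamma(1-\alpha)}\int_0^x (x-t)^{-\alpha} f'(t)\,dt$, $x>0$; for $\alpha-l$ with $l\ge1$ the same series defines $D_x^{(\alpha-l)}$. The paper adopts the convention of replacing every function $f$ by $f(x)-f(0)$, i.e. functions are taken to vanish at the origin. *)

theory Defs
  imports "HOL-Analysis.Analysis"
begin

definition sinc_pi :: "real \<Rightarrow> real" where
  "sinc_pi z = (if z = 0 then 1 else sin (pi * z) / (pi * z))"

definition Dterm :: "real \<Rightarrow> (real \<Rightarrow> real) \<Rightarrow> real \<Rightarrow> nat \<Rightarrow> real" where
  "Dterm beta h x k =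
     sinc_pi (beta - real k) * (Gamma (beta + 1) / Gamma (real k + 1))
     * x powr (real k - beta) * (deriv ^^ k) (\<lambda>y. h y - h 0) x"

definition Dfrac :: "real \<Rightarrow> (real \<Rightarrow> real) \<Rightarrow> real \<Rightarrow> real" where
  "Dfrac beta h x = (\<Sum>k. Dterm beta h x k)"

definition Cbin :: "real \<Rightarrow> nat \<Rightarrow> real" where
  "Cbin alpha l = Gamma (alpha + 1) / (Gamma (real l + 1) * Gamma (alpha - real l + 1))"

definition smooth_pos :: "(real \<Rightarrow> real) \<Rightarrow> bool" where
  "smooth_pos h \<longleftrightarrow> (\<forall>k. \<forall>x>0. (deriv ^^ k) h differentiable (at x))"

end

theory Submission
  imports Defs
begin

text \<open>By the Leibniz rule, the k-th term of the series for D^alpha[fg] is a sum of products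
  g^(l) f^(j) with l + j = k, and each of them is exactly C_alpha^l g^(l) times the j-th term of
  the series for D^(alpha-l)[f], because the Gamma factors telescope:
  Gamma(alpha+1) / (l! Gamma(alpha-l+1)) * Gamma(alpha-l+1) / j! = Gamma(alpha+1) binom(k,l) / k!.
  Absolute convergence of this double series lets us sum it by columns l instead of by
  antidiagonals k.\<close>

lemma sum_choose_Suc_shift:
  fixes a b :: "nat \<Rightarrow> 'a::comm_semiring_1"
  shows "(\<Sum>i=0..Suc n. of_nat (Suc n choose i) * (a i * b (Suc n - i)))
       = (\<Sum>i=0..n. of_nat (n choose i) * (a i * b (Suc (n - i)) + a (Suc i) * b (n - i)))"
proof -
  define t where "t i = a i * b (Suc n - i)" for i
  have "(\<Sum>i=0..Suc n. of_nat (Suc n choose i) * t i)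
      = t 0 + (\<Sum>i=0..n. of_nat (n choose i) * t (Suc i) + of_nat (n choose Suc i) * t (Suc i))"
    by (subst sum.atLeast0_atMost_Suc_shift) (simp add: distrib_right sum.distrib)
  also have "\<dots> = (\<Sum>i=0..n. of_nat (n choose i) * t (Suc i)) + (\<Sum>i=0..Suc n. of_nat (n choose i) * t i)"
    unfolding sum.atLeast0_atMost_Suc_shift[of "\<lambda>i. of_nat (n choose i) * t i"]
    by (simp add: sum.distrib ac_simps)
  also have "(\<Sum>i=0..Suc n. of_nat (n choose i) * t i) = (\<Sum>i=0..n. of_nat (n choose i) * t i)"
    by (simp add: binomial_eq_0)
  finally show ?thesis
    by (auto simp: t_def sum.distrib algebra_simps Suc_diff_le intro!: sum.cong)
qed

lemma higher_deriv_mult_real: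
  fixes f g :: "real \<Rightarrow> real"
  assumes S: "open S"
    and f: "\<And>k x. x \<in> S \<Longrightarrow> (deriv ^^ k) f differentiable (at x)"
    and g: "\<And>k x. x \<in> S \<Longrightarrow> (deriv ^^ k) g differentiable (at x)"
    and "z \<in> S"
  shows "(deriv ^^ n) (\<lambda>w. f w * g w) z
           = (\<Sum>i=0..n. of_nat (n choose i) * (deriv ^^ i) f z * (deriv ^^ (n - i)) g z)"
  using \<open>z \<in> S\<close>
proof (induction n arbitrary: z)
  case 0
  then show ?case by simp
next
  case (Suc n)
  have f': "((deriv ^^ k) f has_real_derivative (deriv ^^ Suc k) f z) (at z)" for k
    using f[OF Suc.prems] by (simp add: DERIV_deriv_iff_real_differentiable)
  have g': "((deriv ^^ k) g has_real_derivative (deriv ^^ Suc k) g z) (at z)" for k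
    using g[OF Suc.prems] by (simp add: DERIV_deriv_iff_real_differentiable)
  have "((\<lambda>w. \<Sum>i=0..n. of_nat (n choose i) * (deriv ^^ i) f w * (deriv ^^ (n - i)) g w)
          has_real_derivative
          (\<Sum>i=0..Suc n. of_nat (Suc n choose i) * (deriv ^^ i) f z * (deriv ^^ (Suc n - i)) g z))
        (at z)"
    unfolding mult.assoc sum_choose_Suc_shift[of n "\<lambda>i. (deriv ^^ i) f z" "\<lambda>j. (deriv ^^ j) g z"]
    by (intro DERIV_sum DERIV_cmult DERIV_mult' f' g')
  then have "((deriv ^^ n) (\<lambda>w. f w * g w) has_real_derivative
          (\<Sum>i=0..Suc n. of_nat (Suc n choose i) * (deriv ^^ i) f z * (deriv ^^ (Suc n - i)) g z))
        (at z)"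
    by (rule has_field_derivative_transform_within_open[OF _ S Suc.prems]) (simp add: Suc.IH)
  then show ?case
    by (simp add: DERIV_imp_deriv)
qed

lemma norm_summable_infsum_eq_suminf:
  fixes h :: "nat \<Rightarrow> 'a::banach"
  assumes "summable (\<lambda>n. norm (h n))"
  shows "infsum h UNIV = suminf h"
  by (rule infsumI[OF norm_summable_imp_has_sum[OF assms]])
     (use summable_norm_cancel[OF assms] in \<open>simp add: summable_sums\<close>)

lemma infsum_antidiagonal:
  fixes A :: "nat \<times> nat \<Rightarrow> 'a::banach"
  assumes "A summable_on UNIV"
  shows "infsum (\<lambda>n. \<Sum>i\<le>n. A (n - i, i)) UNIV = infsum (\<lambda>l. infsum (\<lambda>k. A (l, k)) UNIV) UNIV"
proof -
  define T where "T = (SIGMA n:UNIV. {..n::nat})"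
  have bij: "bij_betw (\<lambda>(n, i). (n - i, i)) T UNIV"
    by (rule bij_betwI[where g="\<lambda>(l, k). (l + k, k)"]) (auto simp: T_def)
  have "(\<lambda>(n, i). A (n - i, i)) summable_on T"
    using summable_on_reindex_bij_betw[OF bij, of A] assms by (simp add: case_prod_unfold)
  then have "infsum (\<lambda>n. \<Sum>i\<le>n. A (n - i, i)) UNIV = infsum (\<lambda>(n, i). A (n - i, i)) T"
    unfolding T_def by (subst infsum_Sigma_banach[symmetric]) simp_all
  also have "\<dots> = infsum A UNIV"
    using infsum_reindex_bij_betw[OF bij, of A] by (simp add: case_prod_unfold)
  also have "\<dots> = infsum (\<lambda>l. infsum (\<lambda>k. A (l, k)) UNIV) UNIV"
    using infsum_Sigma_banach[of A UNIV "\<lambda>_. UNIV"] assms by simp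
  finally show ?thesis .
qed

lemma Cbin_mult_Dterm:
  "Cbin alpha l * Dterm (alpha - real l) h x k
     = Gamma (alpha + 1) * sinc_pi (alpha - real (l + k)) * x powr (real (l + k) - alpha)
       * (deriv ^^ k) (\<lambda>y. h y - h 0) x / (fact l * fact k)"
proof (cases "Gamma (alpha - real l + 1) = 0")
  case False
  have "alpha - real l - real k = alpha - real (l + k)" "real k - (alpha - real l) = real (l + k) - alpha"
    by simp_all
  with False show ?thesis
    unfolding Cbin_def Dterm_def by (simp add: Gamma_fact add.commute field_simps)
next
  case True
  \<comment> \<open>Gamma is 0 at its poles, so the left side vanishes; so does the sinc factor on the right.\<close>
  then obtain m :: nat where "alpha - real l + 1 = - real m"
    by (auto simp: Gamma_eq_zero_iff elim!: nonpos_Ints_cases')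
  then have pole: "alpha - real (l + k) = - real (m + k + 1)"
    by simp
  have "sinc_pi (alpha - real (l + k)) = 0"
    using sin_times_pi_eq_0[of "- real (m + k + 1)"] unfolding sinc_pi_def pole
    by (simp add: mult.commute)
  with True show ?thesis
    by (simp add: Cbin_def)
qed

lemma Dterm_mult:
  fixes f g :: "real \<Rightarrow> real"
  assumes "smooth_pos f" "smooth_pos g" "f 0 = 0" "x > 0"
  shows "Dterm alpha (\<lambda>y. f y * g y) x n
           = (\<Sum>i\<le>n. Cbin alpha (n - i) * (deriv ^^ (n - i)) g x * Dterm (alpha - real (n - i)) f x i)"
proof -
  define c where
    "c = sinc_pi (alpha - real n) * (Gamma (alpha + 1) / Gamma (real n + 1)) * x powr (real n - alpha)"
  have leibniz: "(deriv ^^ n) (\<lambda>y. f y * g y) x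
      = (\<Sum>i\<le>n. of_nat (n choose i) * (deriv ^^ i) f x * (deriv ^^ (n - i)) g x)"
    using higher_deriv_mult_real[of "{0<..}" f g x n] assms
    by (simp add: smooth_pos_def atMost_atLeast0)
  have "Dterm alpha (\<lambda>y. f y * g y) x n = c * (deriv ^^ n) (\<lambda>y. f y * g y) x"
    using \<open>f 0 = 0\<close> by (simp add: Dterm_def c_def)
  also have "\<dots> = (\<Sum>i\<le>n. c * (of_nat (n choose i) * (deriv ^^ i) f x * (deriv ^^ (n - i)) g x))"
    unfolding leibniz sum_distrib_left ..
  also have "\<dots> = (\<Sum>i\<le>n. Cbin alpha (n - i) * (deriv ^^ (n - i)) g x * Dterm (alpha - real (n - i)) f x i)"
  proof (rule sum.cong)
    fix i assume "i \<in> {..n}"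
    then show "c * (of_nat (n choose i) * (deriv ^^ i) f x * (deriv ^^ (n - i)) g x)
        = Cbin alpha (n - i) * (deriv ^^ (n - i)) g x * Dterm (alpha - real (n - i)) f x i"
      using \<open>f 0 = 0\<close> Cbin_mult_Dterm[of alpha "n - i" f x i]
      by (simp add: c_def binomial_fact Gamma_fact add.commute field_simps)
  qed simp
  finally show ?thesis .
qed

theorem mainTheorem1:
  fixes f g :: "real \<Rightarrow> real" and alpha x :: real
  assumes alpha: "0 \<le> alpha" "alpha \<le> 1"
    and smooth: "smooth_pos f" "smooth_pos g"
    and f0: "f 0 = 0"
    and x: "x > 0"
    and conv_lhs: "summable (\<lambda>k. \<bar>Dterm alpha (\<lambda>y. f y * g y) x k\<bar>)"
    and conv_inner: "\<And>l. summable (\<lambda>k. \<bar>Dterm (alpha - real l) f x k\<bar>)"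
    and conv_outer: "summable (\<lambda>l. \<bar>Cbin alpha l * (deriv ^^ l) g x * Dfrac (alpha - real l) f x\<bar>)"
    and conv_double: "(\<lambda>(l, k). \<bar>Cbin alpha l * (deriv ^^ l) g x * Dterm (alpha - real l) f x k\<bar>)
                        summable_on UNIV"
  shows "Dfrac alpha (\<lambda>y. f y * g y) x
           = (\<Sum>l. Cbin alpha l * (deriv ^^ l) g x * Dfrac (alpha - real l) f x)"
proof -
  define A where "A = (\<lambda>(l, k). Cbin alpha l * (deriv ^^ l) g x * Dterm (alpha - real l) f x k)"
  have "A summable_on UNIV"
    by (rule summable_on_iff_abs_summable_on_real[THEN iffD2])
      (use conv_double in \<open>simp add: A_def case_prod_unfold\<close>)
  have "Dfrac alpha (\<lambda>y. f y * g y) x = infsum (Dterm alpha (\<lambda>y. f y * g y) x) UNIV"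
    unfolding Dfrac_def by (rule norm_summable_infsum_eq_suminf[symmetric]) (simp add: conv_lhs)
  also have "\<dots> = infsum (\<lambda>n. \<Sum>i\<le>n. A (n - i, i)) UNIV"
    by (rule infsum_cong) (simp add: A_def Dterm_mult[OF smooth f0 x])
  also have "\<dots> = infsum (\<lambda>l. infsum (\<lambda>k. A (l, k)) UNIV) UNIV"
    by (rule infsum_antidiagonal) fact
  also have "\<dots> = infsum (\<lambda>l. Cbin alpha l * (deriv ^^ l) g x * Dfrac (alpha - real l) f x) UNIV"
  proof (rule infsum_cong)
    fix l
    have "infsum (Dterm (alpha - real l) f x) UNIV = Dfrac (alpha - real l) f x"
      unfolding Dfrac_def by (rule norm_summable_infsum_eq_suminf) (simp add: conv_inner)
    then show "infsum (\<lambda>k. A (l, k)) UNIV = Cbin alpha l * (deriv ^^ l) g x * Dfrac (alpha - real l) f x"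
      by (simp add: A_def infsum_cmult_right')
  qed
  also have "\<dots> = (\<Sum>l. Cbin alpha l * (deriv ^^ l) g x * Dfrac (alpha - real l) f x)"
    by (rule norm_summable_infsum_eq_suminf) (simp add: conv_outer)
  finally show ?thesis .
qed

end
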